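(* Let $M\subset\mathbb{P}^2$ be an open subset equipped with the induced standard flat path geometry (paths are pieces of projective lines). Suppose $M$ is given another flat path geometry structure. Then there exists a section $\sigma\in H^0(M,\mathrm{Sym}^3(T^*M)\otimes\mathcal{O}(3))$ such that the two path geometries coincide along the generalized 3-web $\mathcal{W}_\sigma=\sigma^{-1}(0)\subset\mathbb{P}(TM)$ defined by the zero locus of $\sigma$, i.e. at every point of $\sigma^{-1}(0)$ the leaves of the two path-geometry foliations of $\mathbb{P}(TM)$ through that point have the same tangent line. Moreover, the two path geometries are isomorphic when $\sigma\equiv 0$.
   Context: Complex holomorphic category. For a surface $M$, $\mathbb{P}(TM)\to M$ is the projective tangent bundle with canonical contact 2-plane field $\mathcal{D}$. A path geometry on $M$ is a foliation of $\mathbb{P}(TM)$ by curves tangent to $\mathcal{D}$ and transversal to the fibers of $\mathbb{P}(TM)\to M$ (its leaves project to the paths, one through each point in each direction). It is flat if locally equivalent to the standard path geometry of lines in $\mathbb{P}^2$. $\mathcal{O}(3)$ denotes the cube of the hyperplane bundle of $\mathbb{P}^2$ restricted to $M$. A section $\sigma$ of $\mathrm{Sym}^3(T^*M)\otimes\mathcal{O}(3)$ is at each point a cubic form on $T_xM$ defined up to a nonzero scalar, so its zero locus $\sigma^{-1}(0)=\{[\xi]\in\mathbb{P}(T_xM): \sigma(\xi,\xi,\xi)=0,\ x\in M\}\subset\mathbb{P}(TM)$ is well defined; when $\sigma\neq0$ has no repeated roots it consists of three tangent directions at each point, i.e. a 3-web. *)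

theory Defs
  imports "HOL-Complex_Analysis.Complex_Analysis"
begin

text \<open>A point of P^2 is a nonzero vector of complex^3
  up to nonzero scalars; an open subset M of P^2 is encoded by its (open, C*-invariant)
  cone C of homogeneous representatives.\<close>

definition proj_open :: "(complex^3) set \<Rightarrow> bool" where
  "proj_open C \<longleftrightarrow> open C \<and> 0 \<notin> C \<and> (\<forall>v\<in>C. \<forall>a::complex. a \<noteq> 0 \<longrightarrow> a *s v \<in> C)"

text \<open>w represents a tangent direction at [v] (the line through [v] and [w]).\<close>
definition indep :: "complex^3 \<Rightarrow> complex^3 \<Rightarrow> bool" where
  "indep v w \<longleftrightarrow> v \<noteq> 0 \<and> (\<forall>c::complex. w \<noteq> c *s v)"

definition det3 :: "complex^3 \<Rightarrow> complex^3 \<Rightarrow> complex^3 \<Rightarrow> complex" where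
  "det3 a b c =
     a$1 * (b$2 * c$3 - b$3 * c$2) - a$2 * (b$1 * c$3 - b$3 * c$1) + a$3 * (b$1 * c$2 - b$2 * c$1)"

text \<open>Holomorphy in several complex variables (Osgood: continuous and separately holomorphic).\<close>
definition holo_on :: "(complex^'n) set \<Rightarrow> (complex^'n \<Rightarrow> complex) \<Rightarrow> bool" where
  "holo_on U f \<longleftrightarrow> open U \<and> continuous_on U f \<and>
     (\<forall>z\<in>U. \<forall>i. (\<lambda>t. f (z + t *s axis i 1)) field_differentiable (at 0))"

definition holo2_on :: "((complex^3) \<times> (complex^3)) set \<Rightarrow> (complex^3 \<Rightarrow> complex^3 \<Rightarrow> complex) \<Rightarrow> bool" where
  "holo2_on \<Omega> f \<longleftrightarrow> open \<Omega> \<and> continuous_on \<Omega> (case_prod f) \<and>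
     (\<forall>(v,w)\<in>\<Omega>. \<forall>i.
        (\<lambda>t. f (v + t *s axis i 1) w) field_differentiable (at 0) \<and>
        (\<lambda>t. f v (w + t *s axis i 1)) field_differentiable (at 0))"

text \<open>Projective tangent bundle P(TM), in homogeneous coordinates.\<close>
definition ptb :: "(complex^3) set \<Rightarrow> ((complex^3) \<times> (complex^3)) set" where
  "ptb C = {(v,w). v \<in> C \<and> indep v w}"

text \<open>A path geometry on M, i.e. a foliation of P(TM) by curves tangent to the contact
  distribution and transversal to the fibres, encoded by its tangent line field:
  at the point ([v],[v,w]) the leaf tangent (inside the contact plane, transversal to
  the fibre) is determined by the number alpha v w = det(g, g', g'')(0) for any lift g of
  the projected path with g(0)=v, g'(0)=w.  The standard path geometry of lines is alpha = 0.\<close>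
definition path_geometry :: "(complex^3) set \<Rightarrow> (complex^3 \<Rightarrow> complex^3 \<Rightarrow> complex) \<Rightarrow> bool" where
  "path_geometry C \<alpha> \<longleftrightarrow> proj_open C \<and> holo2_on (ptb C) \<alpha> \<and>
     (\<forall>(v,w)\<in>ptb C. \<forall>a b c::complex. a \<noteq> 0 \<and> b \<noteq> 0 \<longrightarrow>
        \<alpha> (a *s v) (b *s w + c *s v) = b^3 * \<alpha> v w)"

definition std_geometry :: "complex^3 \<Rightarrow> complex^3 \<Rightarrow> complex" where
  "std_geometry v w = 0"

definition cderiv :: "(complex \<Rightarrow> complex^3) \<Rightarrow> complex \<Rightarrow> complex^3" where
  "cderiv g t = (\<chi> i. deriv (\<lambda>s. g s $ i) t)"

text \<open>Lifted parametrisations of paths (projections of leaves) of the geometry alpha.\<close>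
definition leaf :: "(complex^3) set \<Rightarrow> (complex^3 \<Rightarrow> complex^3 \<Rightarrow> complex) \<Rightarrow> complex set
                      \<Rightarrow> (complex \<Rightarrow> complex^3) \<Rightarrow> bool" where
  "leaf C \<alpha> D g \<longleftrightarrow> open D \<and> (\<forall>i. (\<lambda>t. g t $ i) holomorphic_on D) \<and>
     (\<forall>t\<in>D. g t \<in> C \<and> indep (g t) (cderiv g t) \<and>
        det3 (g t) (cderiv g t) (cderiv (cderiv g) t) = \<alpha> (g t) (cderiv g t))"

text \<open>An isomorphism of path geometries (C,alpha) \<rightarrow> (C',alpha'): a biholomorphism of the
  corresponding open subsets of P^2 (given by a homogeneous lift phi) mapping paths to paths.\<close>
definition path_iso :: "(complex^3) set \<Rightarrow> (complex^3 \<Rightarrow> complex^3 \<Rightarrow> complex) \<Rightarrow>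
     (complex^3) set \<Rightarrow> (complex^3 \<Rightarrow> complex^3 \<Rightarrow> complex) \<Rightarrow> (complex^3 \<Rightarrow> complex^3) \<Rightarrow> bool" where
  "path_iso C \<alpha> C' \<alpha>' \<phi> \<longleftrightarrow> proj_open C \<and> proj_open C' \<and>
     (\<forall>i. holo_on C (\<lambda>v. \<phi> v $ i)) \<and>
     (\<forall>v\<in>C. \<forall>a::complex. a \<noteq> 0 \<longrightarrow> \<phi> (a *s v) = a *s \<phi> v) \<and>
     (\<forall>v\<in>C. \<phi> v \<in> C') \<and>
     (\<forall>v'\<in>C'. \<exists>v\<in>C. \<exists>a::complex. a \<noteq> 0 \<and> \<phi> v = a *s v') \<and>
     (\<forall>u\<in>C. \<forall>v\<in>C. \<forall>a::complex. \<phi> u = a *s \<phi> v \<longrightarrow> (\<exists>b::complex. u = b *s v)) \<and>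
     (\<forall>v\<in>C. \<exists>L. (\<phi> has_derivative L) (at v) \<and> inj L) \<and>
     (\<forall>D g. leaf C \<alpha> D g \<longrightarrow> leaf C' \<alpha>' D (\<phi> \<circ> g))"

definition flat :: "(complex^3) set \<Rightarrow> (complex^3 \<Rightarrow> complex^3 \<Rightarrow> complex) \<Rightarrow> bool" where
  "flat C \<alpha> \<longleftrightarrow> (\<forall>v\<in>C. \<exists>U U' \<phi>. v \<in> U \<and> U \<subseteq> C \<and> path_iso U \<alpha> U' std_geometry \<phi>)"

text \<open>Sections of Sym^3(T*M) \<otimes> O(3): a holomorphic family of cubic forms
  S(v,w) = sum c_ijk(v) w_i w_j w_k, invariant under w \<mapsto> w + c v (so a cubic form on
  C^3/<v> = tangent directions) and homogeneous of degree 0 in v.\<close>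
definition cubic_eval :: "(3 \<Rightarrow> 3 \<Rightarrow> 3 \<Rightarrow> complex^3 \<Rightarrow> complex) \<Rightarrow> complex^3 \<Rightarrow> complex^3 \<Rightarrow> complex" where
  "cubic_eval c v w = (\<Sum>i\<in>UNIV. \<Sum>j\<in>UNIV. \<Sum>k\<in>UNIV. c i j k v * w$i * w$j * w$k)"

definition section3 :: "(complex^3) set \<Rightarrow> (3 \<Rightarrow> 3 \<Rightarrow> 3 \<Rightarrow> complex^3 \<Rightarrow> complex) \<Rightarrow> bool" where
  "section3 C c \<longleftrightarrow> (\<forall>i j k. holo_on C (c i j k)) \<and>
     (\<forall>v\<in>C. \<forall>w. \<forall>s::complex. cubic_eval c v (w + s *s v) = cubic_eval c v w) \<and>
     (\<forall>v\<in>C. \<forall>w. \<forall>a::complex. a \<noteq> 0 \<longrightarrow> cubic_eval c (a *s v) w = cubic_eval c v w)"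

end

(*
  In homogeneous coordinates a path geometry is a function alpha(v, w), invariant under
  w |-> w + s v, of weight 0 in v and homogeneous of degree 3 in w.  Extended by zero to the
  directions w in C v, its restriction to a plane complementary to v is holomorphic on C^2 - {0}
  and homogeneous of degree 3, hence a binary cubic form by Liouville's theorem.  Thus alpha(v, -)
  is a cubic form on C^3 / C v, and its polarisation has coefficients depending holomorphically
  on v.  These define the section sigma: its zero locus is exactly where alpha agrees with the
  standard geometry alpha = 0, and if sigma vanishes identically the identity map is an
  isomorphism.
*)

theory Submission
  imports Defs
begin

no_notation fps_nth (infixl \<open>$\<close> 75)

lemma homogeneous_restriction_polynomial:
  fixes h :: "complex \<Rightarrow> complex \<Rightarrow> complex"
  assumes hom: "\<And>b x y. b \<noteq> 0 \<Longrightarrow> h (b * x) (b * y) = b ^ n * h x y"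
    and entire: "(\<lambda>t. h 1 t) holomorphic_on UNIV"
    and cont: "continuous_on UNIV (\<lambda>t. h t 1)"
  shows "\<exists>a. \<forall>t. h 1 t = (\<Sum>m\<le>n. a m * t ^ m)"
proof -
  obtain B where B: "\<And>z. z \<in> cball 0 1 \<Longrightarrow> norm (h z 1) \<le> B"
    using compact_imp_bounded[OF compact_continuous_image[OF continuous_on_subset[OF cont]]]
    unfolding bounded_iff by (metis compact_cball image_eqI subset_UNIV)
  \<comment> \<open>\<open>h 1 z = z ^ n * h (1 / z) 1\<close>, so \<open>h 1\<close> has polynomial growth of degree \<open>n\<close>\<close>
  have "norm (h 1 z) \<le> B * norm z ^ n" if "1 \<le> norm z" for z
  proof -
    have "z \<noteq> 0"
      using that by auto
    then have "norm (h 1 z) = norm z ^ n * norm (h (1 / z) 1)"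
      using hom[of z "1 / z" 1] by (simp add: norm_mult norm_power)
    also have "\<dots> \<le> norm z ^ n * B"
      using that by (intro mult_left_mono B) (simp_all add: norm_divide divide_le_eq_1)
    finally show ?thesis
      by (simp add: mult.commute)
  qed
  then have "h 1 t = (\<Sum>m\<le>n. (deriv ^^ m) (h 1) 0 / fact m * t ^ m)" for t
    using entire by (intro Liouville_polynomial) auto
  then show ?thesis
    by (intro exI allI)
qed

lemma binary_form_of_homogeneous:
  fixes h :: "complex \<Rightarrow> complex \<Rightarrow> complex"
  assumes hom: "\<And>b x y. b \<noteq> 0 \<Longrightarrow> h (b * x) (b * y) = b ^ n * h x y"
    and n: "0 < n"
    and entire: "(\<lambda>t. h 1 t) holomorphic_on UNIV"
    and cont: "continuous_on UNIV (\<lambda>t. h t 1)"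
  shows "\<exists>a. \<forall>x y. h x y = (\<Sum>m\<le>n. a m * x ^ (n - m) * y ^ m)"
proof -
  obtain a where restriction: "\<And>t. h 1 t = (\<Sum>m\<le>n. a m * t ^ m)"
    using homogeneous_restriction_polynomial[OF hom entire cont] by blast
  define k where "k = (\<lambda>t. h t 1)"
  have off_axis: "h x y = (\<Sum>m\<le>n. a m * x ^ (n - m) * y ^ m)" if "x \<noteq> 0" for x y
  proof -
    have "h x y = x ^ n * h 1 (y / x)"
      using hom[OF that, of 1 "y / x"] that by simp
    also have "\<dots> = (\<Sum>m\<le>n. a m * x ^ (n - m) * y ^ m)"
      using that by (simp add: restriction sum_distrib_left power_divide power_diff field_simps)
    finally show ?thesis .
  qed
  define p where "p s = (\<Sum>m\<le>n. a m * s ^ (n - m))" for s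
  \<comment> \<open>the line \<open>x = 0\<close> is reached by continuity of \<open>h \<cdot> 1\<close> at \<open>0\<close>\<close>
  have "k 0 = p 0"
  proof (rule tendsto_unique[OF trivial_limit_at])
    show "(k \<longlongrightarrow> k 0) (at 0)"
      using cont by (simp add: continuous_on_eq_continuous_at isCont_def k_def)
    have "(p \<longlongrightarrow> p 0) (at 0)"
      unfolding p_def by (intro tendsto_intros)
    moreover have "\<forall>\<^sub>F s in at 0. p s = k s"
      by (auto simp: eventually_at_filter p_def k_def off_axis)
    ultimately show "(k \<longlongrightarrow> p 0) (at 0)"
      by (rule Lim_transform_eventually)
  qed
  have "(2::complex) ^ n \<noteq> 1"
  proof -
    have "(2::nat) ^ n \<noteq> 1"
      using n by simp
    then show ?thesis
      by (metis of_nat_eq_1_iff of_nat_numeral of_nat_power)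
  qed
  then have h00: "h 0 0 = 0"
    using hom[of 2 0 0] by simp
  have on_axis: "h 0 y = (\<Sum>m\<le>n. a m * 0 ^ (n - m) * y ^ m)" for y
  proof -
    have "h 0 y = y ^ n * k 0"
      using hom[of y 0 1] h00 n by (cases "y = 0") (simp_all add: k_def)
    also have "\<dots> = (\<Sum>m\<le>n. a m * 0 ^ (n - m) * y ^ m)"
      unfolding \<open>k 0 = p 0\<close> p_def sum_distrib_left
      by (intro sum.cong refl) (auto simp: zero_power le_less)
    finally show ?thesis .
  qed
  have "h x y = (\<Sum>m\<le>n. a m * x ^ (n - m) * y ^ m)" for x y
    by (cases "x = 0") (simp_all add: off_axis on_axis)
  then show ?thesis
    by blast
qed

text \<open>The binary cubic taking the values \<open>A0, A3, S, D\<close> at \<open>(1,0), (0,1), (1,1), (1,-1)\<close>.\<close>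

definition cubic_from_values :: "'a::field \<Rightarrow> 'a \<Rightarrow> 'a \<Rightarrow> 'a \<Rightarrow> 'a \<Rightarrow> 'a \<Rightarrow> 'a" where
  "cubic_from_values A0 A3 S D x y =
     A0 * x^3 + ((S - D) / 2 - A3) * x^2 * y + ((S + D) / 2 - A0) * x * y^2 + A3 * y^3"

lemma binary_cubic_from_values:
  fixes f :: "'a::field_char_0 \<Rightarrow> 'a \<Rightarrow> 'a"
  assumes "\<And>x y. f x y = a0 * x^3 + a1 * x^2 * y + a2 * x * y^2 + a3 * y^3"
  shows "f x y = cubic_from_values (f 1 0) (f 0 1) (f 1 1) (f 1 (-1)) x y"
  unfolding cubic_from_values_def assms by (simp add: field_simps)

definition trilinear_form ::
    "('n::finite \<Rightarrow> 'n \<Rightarrow> 'n \<Rightarrow> 'a::comm_ring_1) \<Rightarrow> 'a^'n \<Rightarrow> 'a^'n \<Rightarrow> 'a^'n \<Rightarrow> 'a" where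
  "trilinear_form d x y z = (\<Sum>a\<in>UNIV. \<Sum>b\<in>UNIV. \<Sum>c\<in>UNIV. d a b c * x$a * y$b * z$c)"

definition polarize :: "('a::field^'n::finite \<Rightarrow> 'a) \<Rightarrow> 'a^'n \<Rightarrow> 'a^'n \<Rightarrow> 'a^'n \<Rightarrow> 'a" where
  "polarize F x y z = (F (x + y + z) - F (x + y) - F (x + z) - F (y + z) + F x + F y + F z) / 6"

lemma trilinear_form_add1:
  "trilinear_form d (x + x') y z = trilinear_form d x y z + trilinear_form d x' y z"
  unfolding trilinear_form_def by (simp add: distrib_left distrib_right sum.distrib)

lemma trilinear_form_add2:
  "trilinear_form d x (y + y') z = trilinear_form d x y z + trilinear_form d x y' z"
  unfolding trilinear_form_def by (simp add: distrib_left distrib_right sum.distrib)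

lemma trilinear_form_add3:
  "trilinear_form d x y (z + z') = trilinear_form d x y z + trilinear_form d x y z'"
  unfolding trilinear_form_def by (simp add: distrib_left distrib_right sum.distrib)

lemma trilinear_form_add_coeffs:
  "trilinear_form (\<lambda>a b c. d a b c + e a b c) x y z
    = trilinear_form d x y z + trilinear_form e x y z"
  unfolding trilinear_form_def by (simp add: distrib_right sum.distrib)

lemma trilinear_form_scale_coeffs:
  "trilinear_form (\<lambda>a b c. r * d a b c) x y z = r * trilinear_form d x y z"
  unfolding trilinear_form_def by (simp add: sum_distrib_left ac_simps)

lemma trilinear_form_axis: "trilinear_form d (axis a 1) (axis b 1) (axis c 1) = d a b c"
proof -
  have "x * (if P then 1 else 0) = (if P then x else 0)" for x :: 'a and P
    by simp
  then show ?thesis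
    unfolding trilinear_form_def by (simp add: axis_def)
qed

lemma trilinear_form_diag_swap23: "trilinear_form (\<lambda>a b c. d a c b) w w w = trilinear_form d w w w"
  unfolding trilinear_form_def by (rule sum.cong[OF refl], subst sum.swap) (simp add: ac_simps)

lemma trilinear_form_diag_swap12: "trilinear_form (\<lambda>a b c. d b a c) w w w = trilinear_form d w w w"
  unfolding trilinear_form_def by (subst sum.swap) (simp add: ac_simps)

lemma trilinear_form_diag_symmetrize:
  fixes d :: "'n::finite \<Rightarrow> 'n \<Rightarrow> 'n \<Rightarrow> 'a::field_char_0"
  shows "trilinear_form (\<lambda>a b c. (d a b c + d a c b + d b a c + d b c a + d c a b + d c b a) / 6)
      w w w = trilinear_form d w w w"
proof -
  have acb: "trilinear_form (\<lambda>a b c. d a c b) w w w = trilinear_form d w w w"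
    by (rule trilinear_form_diag_swap23)
  have bac: "trilinear_form (\<lambda>a b c. d b a c) w w w = trilinear_form d w w w"
    by (rule trilinear_form_diag_swap12)
  have bca: "trilinear_form (\<lambda>a b c. d b c a) w w w = trilinear_form d w w w"
    using trilinear_form_diag_swap12[of "\<lambda>a b c. d a c b" w] acb by simp
  have cab: "trilinear_form (\<lambda>a b c. d c a b) w w w = trilinear_form d w w w"
    using trilinear_form_diag_swap23[of "\<lambda>a b c. d b a c" w] bac by simp
  have cba: "trilinear_form (\<lambda>a b c. d c b a) w w w = trilinear_form d w w w"
    using trilinear_form_diag_swap12[of "\<lambda>a b c. d c a b" w] cab by simp
  have "trilinear_form (\<lambda>a b c. (d a b c + d a c b + d b a c + d b c a + d c a b + d c b a) / 6)
      w w w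
    = (trilinear_form d w w w + trilinear_form (\<lambda>a b c. d a c b) w w w
       + trilinear_form (\<lambda>a b c. d b a c) w w w + trilinear_form (\<lambda>a b c. d b c a) w w w
       + trilinear_form (\<lambda>a b c. d c a b) w w w + trilinear_form (\<lambda>a b c. d c b a) w w w) / 6"
    unfolding trilinear_form_def
    by (simp add: sum.distrib sum_divide_distrib add_divide_distrib distrib_right)
  then show ?thesis
    unfolding acb bac bca cab cba by simp
qed

lemma polarize_trilinear_form:
  assumes "\<And>w. F w = trilinear_form d w w w"
  shows "polarize F x y z = (trilinear_form d x y z + trilinear_form d x z y
    + trilinear_form d y x z + trilinear_form d y z x
    + trilinear_form d z x y + trilinear_form d z y x) / 6"
  unfolding polarize_def assms trilinear_form_add1 trilinear_form_add2 trilinear_form_add3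
  by (simp add: algebra_simps)

lemma sum_polarize_axis:
  fixes F :: "'a::field_char_0^'n::finite \<Rightarrow> 'a"
  assumes "\<And>w. F w = trilinear_form d w w w"
  shows "(\<Sum>a\<in>UNIV. \<Sum>b\<in>UNIV. \<Sum>c\<in>UNIV.
      polarize F (axis a 1) (axis b 1) (axis c 1) * w$a * w$b * w$c) = F w"
  using trilinear_form_diag_symmetrize[of d w]
  unfolding polarize_trilinear_form[OF assms] trilinear_form_axis assms
  by (simp add: trilinear_form_def)

lemma product_linear_forms:
  fixes w :: "'a::comm_ring_1^'n::finite"
  shows "(\<Sum>a\<in>UNIV. p a * w$a) * (\<Sum>b\<in>UNIV. q b * w$b) * (\<Sum>c\<in>UNIV. r c * w$c)
    = trilinear_form (\<lambda>a b c. p a * q b * r c) w w w"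
  unfolding trilinear_form_def sum_product sum_distrib_right
  by (intro sum.cong refl) (simp add: sum_distrib_left ac_simps)

lemma binary_cubic_linear_forms:
  fixes X Y :: "'a::comm_ring_1^'n::finite \<Rightarrow> 'a"
  assumes "\<And>w. X w = (\<Sum>l\<in>UNIV. p l * w$l)" and "\<And>w. Y w = (\<Sum>l\<in>UNIV. q l * w$l)"
  shows "\<exists>d. \<forall>w. a0 * X w ^ 3 + a1 * X w ^ 2 * Y w + a2 * X w * Y w ^ 2 + a3 * Y w ^ 3
    = trilinear_form d w w w"
proof -
  define d where "d a b c = a0 * (p a * p b * p c) + a1 * (p a * p b * q c)
    + a2 * (p a * q b * q c) + a3 * (q a * q b * q c)" for a b c
  have "a0 * X w ^ 3 + a1 * X w ^ 2 * Y w + a2 * X w * Y w ^ 2 + a3 * Y w ^ 3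
    = trilinear_form d w w w" for w
  proof -
    have "a0 * X w ^ 3 + a1 * X w ^ 2 * Y w + a2 * X w * Y w ^ 2 + a3 * Y w ^ 3
      = a0 * (X w * X w * X w) + a1 * (X w * X w * Y w)
        + a2 * (X w * Y w * Y w) + a3 * (Y w * Y w * Y w)"
      by (simp add: power2_eq_square power3_eq_cube ac_simps)
    also have "\<dots> = trilinear_form d w w w"
      unfolding assms product_linear_forms d_def trilinear_form_add_coeffs
        trilinear_form_scale_coeffs ..
    finally show ?thesis .
  qed
  then show ?thesis
    by blast
qed

lemma holo_on_const: "open U \<Longrightarrow> holo_on U (\<lambda>v. c)"
  unfolding holo_on_def by auto

lemma holo_on_coord: "open U \<Longrightarrow> holo_on U (\<lambda>v. v $ i)"
  unfolding holo_on_def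
proof (intro conjI ballI allI)
  fix z l
  show "(\<lambda>t. (z + t *s axis l 1) $ i) field_differentiable (at 0)"
    unfolding vector_add_component vector_smult_component
    by (intro field_differentiable_add field_differentiable_mult field_differentiable_const
        field_differentiable_ident)
qed (auto intro: continuous_intros)

lemma holo_on_add: "holo_on U f \<Longrightarrow> holo_on U g \<Longrightarrow> holo_on U (\<lambda>v. f v + g v)"
  unfolding holo_on_def by (auto intro!: continuous_intros field_differentiable_add)

lemma holo_on_diff: "holo_on U f \<Longrightarrow> holo_on U g \<Longrightarrow> holo_on U (\<lambda>v. f v - g v)"
  unfolding holo_on_def by (auto intro!: continuous_intros field_differentiable_diff)

lemma holo_on_mult: "holo_on U f \<Longrightarrow> holo_on U g \<Longrightarrow> holo_on U (\<lambda>v. f v * g v)"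
  unfolding holo_on_def by (auto intro!: continuous_intros field_differentiable_mult)

lemma holo_on_divide:
  "holo_on U f \<Longrightarrow> holo_on U g \<Longrightarrow> (\<And>v. v \<in> U \<Longrightarrow> g v \<noteq> 0) \<Longrightarrow> holo_on U (\<lambda>v. f v / g v)"
  unfolding holo_on_def by (auto intro!: continuous_intros field_differentiable_divide)

lemma holo_on_power: "holo_on U f \<Longrightarrow> holo_on U (\<lambda>v. f v ^ n)"
  unfolding holo_on_def by (auto intro!: continuous_intros field_differentiable_power)

lemma eventually_axis_line_in:
  fixes z :: "complex^'n"
  assumes "open U" "z \<in> U"
  shows "\<forall>\<^sub>F t in at 0. z + t *s axis i 1 \<in> U"
proof -
  have "((\<lambda>t. z + t *s axis i 1) \<longlongrightarrow> z) (at (0::complex))"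
    by (rule vec_tendstoI) (auto intro!: tendsto_eq_intros)
  then show ?thesis
    using assms by (rule topological_tendstoD)
qed

lemma holo_on_cong:
  assumes g: "holo_on U g" and eq: "\<And>v. v \<in> U \<Longrightarrow> f v = g v"
  shows "holo_on U f"
  unfolding holo_on_def
proof (intro conjI ballI allI)
  show "open U" "continuous_on U f"
    using g eq continuous_on_cong[of U U f g] by (simp_all add: holo_on_def)
  fix z i
  assume "z \<in> U"
  have "\<forall>\<^sub>F t in at 0. z + t *s axis i 1 \<in> U"
    using g \<open>z \<in> U\<close> by (intro eventually_axis_line_in) (simp_all add: holo_on_def)
  then have "\<forall>\<^sub>F t in at 0. f (z + t *s axis i 1) = g (z + t *s axis i 1)"
    by (rule eventually_mono) (rule eq)
  moreover have "(\<lambda>t. g (z + t *s axis i 1)) field_differentiable (at 0)"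
    using g \<open>z \<in> U\<close> by (simp add: holo_on_def)
  ultimately show "(\<lambda>t. f (z + t *s axis i 1)) field_differentiable (at 0)"
    using has_field_derivative_cong_eventually
        [of "\<lambda>t. f (z + t *s axis i 1)" "\<lambda>t. g (z + t *s axis i 1)" 0 UNIV]
      eq[OF \<open>z \<in> U\<close>]
    unfolding field_differentiable_def by simp
qed

lemma holo_on_local:
  assumes "open C" and "\<And>v. v \<in> C \<Longrightarrow> \<exists>U. v \<in> U \<and> U \<subseteq> C \<and> holo_on U f"
  shows "holo_on C f"
  unfolding holo_on_def
proof (intro conjI ballI allI)
  show "open C" by fact
  show "continuous_on C f"
    unfolding continuous_on_eq_continuous_at[OF \<open>open C\<close>]
    using assms(2) by (metis holo_on_def continuous_on_eq_continuous_at)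
  show "(\<lambda>t. f (z + t *s axis i 1)) field_differentiable (at 0)" if "z \<in> C" for z i
    using assms(2)[OF that] by (auto simp: holo_on_def)
qed

lemma indep_add_multiple: "indep v (w + s *s v) \<longleftrightarrow> indep v w"
proof -
  have "w + s *s v = c *s v \<longleftrightarrow> w = (c - s) *s v" for c
    by (metis add_diff_cancel_right' diff_add_cancel vector_sadd_rdistrib)
  then show ?thesis
    unfolding indep_def by (metis add_diff_cancel_right')
qed

lemma indep_smult_left:
  assumes "a \<noteq> 0"
  shows "indep (a *s v) w \<longleftrightarrow> indep v w"
proof -
  have "(\<forall>c. w \<noteq> c *s (a *s v)) \<longleftrightarrow> (\<forall>c. w \<noteq> c *s v)"
    using assms by (metis vector_smult_assoc nonzero_divide_eq_eq)
  then show ?thesis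
    using assms by (simp add: indep_def)
qed

lemma indep_smult_right: "b \<noteq> 0 \<Longrightarrow> indep v (b *s w) \<longleftrightarrow> indep v w"
  unfolding indep_def
  by (metis vector_smult_assoc nonzero_mult_div_cancel_left vector_mul_lcancel
      times_divide_eq_right)

lemma chart_exists:
  fixes v :: "complex^3"
  assumes "v \<noteq> 0"
  obtains i j k where "v$i \<noteq> 0" "i \<noteq> j" "i \<noteq> k" "j \<noteq> k"
proof -
  obtain i where "v$i \<noteq> 0"
    using assms by (auto simp: vec_eq_iff)
  moreover have "(1::3) \<noteq> 2" "(1::3) \<noteq> 3" "(2::3) \<noteq> 3"
    by simp_all
  ultimately show ?thesis
    using that exhaust_3[of i] by metis
qed

lemma index_cases: "i \<noteq> j \<Longrightarrow> i \<noteq> k \<Longrightarrow> j \<noteq> k \<Longrightarrow> (l::3) = i \<or> l = j \<or> l = k"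
  using exhaust_3[of i] exhaust_3[of j] exhaust_3[of k] exhaust_3[of l] by fastforce

lemma indep_axis_combination:
  fixes v :: "complex^3"
  assumes vi: "v$i \<noteq> 0" and d: "i \<noteq> j" "i \<noteq> k" "j \<noteq> k" and xy: "x \<noteq> 0 \<or> y \<noteq> 0"
  shows "indep v (x *s axis j 1 + y *s axis k 1)"
  unfolding indep_def
proof (intro conjI allI notI)
  show "v = 0 \<Longrightarrow> False"
    using vi by simp
  fix c
  assume e: "x *s axis j 1 + y *s axis k 1 = c *s v"
  have "c = 0"
    using arg_cong[OF e, of "\<lambda>u. u$i"] d vi by (simp add: axis_def)
  then have "x = 0" "y = 0"
    using arg_cong[OF e, of "\<lambda>u. u$j"] arg_cong[OF e, of "\<lambda>u. u$k"] d by (simp_all add: axis_def)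
  then show False
    using xy by simp
qed

text \<open>Where \<open>v$i \<noteq> 0\<close>, the vectors \<open>axis j 1, axis k 1\<close> span a complement of \<open>v\<close>;
  \<open>chart_coord i j v u\<close> is the \<open>axis j 1\<close>-coordinate of \<open>u\<close> modulo \<open>v\<close>.\<close>

definition chart_coord :: "3 \<Rightarrow> 3 \<Rightarrow> complex^3 \<Rightarrow> complex^3 \<Rightarrow> complex" where
  "chart_coord i j v u = u$j - u$i * v$j / v$i"

lemma chart_decomposition:
  fixes v :: "complex^3"
  assumes vi: "v$i \<noteq> 0" and d: "i \<noteq> j" "i \<noteq> k" "j \<noteq> k"
  shows "u = chart_coord i j v u *s axis j 1 + chart_coord i k v u *s axis k 1 + (u$i / v$i) *s v"
proof (subst vec_eq_iff, intro allI)
  fix l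
  consider "l = i" | "l = j" | "l = k"
    using index_cases[OF d] by blast
  then show "u$l =
      (chart_coord i j v u *s axis j 1 + chart_coord i k v u *s axis k 1 + (u$i / v$i) *s v) $ l"
    by cases (use d vi in \<open>simp_all add: axis_def chart_coord_def\<close>)
qed

lemma chart_coord_linear:
  assumes "j \<noteq> i"
  shows "chart_coord i j v w =
    (\<Sum>l\<in>UNIV. ((if l = j then 1 else 0) - (if l = i then v$j / v$i else 0)) * w$l)"
  using assms
  by (simp add: chart_coord_def left_diff_distrib sum_subtractf if_distrib[of "\<lambda>x. x * _"]
      cong: if_cong)

definition extend_by_zero ::
    "(complex^3 \<Rightarrow> complex^3 \<Rightarrow> complex) \<Rightarrow> complex^3 \<Rightarrow> complex^3 \<Rightarrow> complex" where
  "extend_by_zero \<alpha> v w = (if indep v w then \<alpha> v w else 0)"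

lemma path_geometry_homogeneous:
  assumes "path_geometry C \<alpha>" "v \<in> C" "indep v w" "a \<noteq> 0" "b \<noteq> 0"
  shows "\<alpha> (a *s v) (b *s w + c *s v) = b^3 * \<alpha> v w"
  using assms unfolding path_geometry_def ptb_def by blast

lemma extend_by_zero_add_multiple:
  assumes "path_geometry C \<alpha>" "v \<in> C"
  shows "extend_by_zero \<alpha> v (w + s *s v) = extend_by_zero \<alpha> v w"
  using path_geometry_homogeneous[OF assms, of w 1 1 s]
  by (simp add: extend_by_zero_def indep_add_multiple)

lemma extend_by_zero_smult_base:
  assumes "path_geometry C \<alpha>" "v \<in> C" "a \<noteq> 0"
  shows "extend_by_zero \<alpha> (a *s v) w = extend_by_zero \<alpha> v w"
  using path_geometry_homogeneous[OF assms(1,2), of w a 1 0] assms(3)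
  by (simp add: extend_by_zero_def indep_smult_left)

lemma extend_by_zero_smult:
  assumes "path_geometry C \<alpha>" "v \<in> C" "b \<noteq> 0"
  shows "extend_by_zero \<alpha> v (b *s w) = b^3 * extend_by_zero \<alpha> v w"
  using path_geometry_homogeneous[OF assms(1,2), of w 1 b 0] assms(3)
  by (simp add: extend_by_zero_def indep_smult_right)

lemma field_differentiable_shift:
  "(\<lambda>s. g (s + t)) field_differentiable (at 0) \<Longrightarrow> g field_differentiable (at t)"
  using DERIV_shift[of g _ 0 t] by (simp add: field_differentiable_def)

lemma path_geometry_differentiable_fibre:
  assumes "path_geometry C \<alpha>" "v \<in> C" "indep v w"
  shows "(\<lambda>t. \<alpha> v (w + t *s axis l 1)) field_differentiable (at 0)"
  using assms unfolding path_geometry_def holo2_on_def ptb_def by fast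

lemma extend_by_zero_binary_cubic:
  fixes v :: "complex^3"
  assumes pg: "path_geometry C \<alpha>" and vC: "v \<in> C" and vi: "v$i \<noteq> 0"
    and d: "i \<noteq> j" "i \<noteq> k" "j \<noteq> k"
  shows "\<exists>a0 a1 a2 a3. \<forall>x y. extend_by_zero \<alpha> v (x *s axis j 1 + y *s axis k 1)
            = a0 * x^3 + a1 * x^2 * y + a2 * x * y^2 + a3 * y^3"
proof -
  define h where "h x y = extend_by_zero \<alpha> v (x *s axis j 1 + y *s axis k 1)" for x y
  have hom: "h (b * x) (b * y) = b^3 * h x y" if "b \<noteq> 0" for b x y
  proof -
    have e: "(b * x) *s axis j 1 + (b * y) *s axis k 1 = b *s (x *s axis j 1 + y *s axis k 1)"
      by (simp add: vector_smult_assoc vector_add_ldistrib)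
    show ?thesis
      unfolding h_def e by (rule extend_by_zero_smult[OF pg vC that])
  qed
  have h_value: "h x y = \<alpha> v (x *s axis j 1 + y *s axis k 1)" if "x \<noteq> 0 \<or> y \<noteq> 0" for x y
    using indep_axis_combination[OF vi d that] by (simp add: h_def extend_by_zero_def)
  have fibre:
    "(\<lambda>s. \<alpha> v ((x *s axis j 1 + y *s axis k 1) + s *s axis l 1)) field_differentiable (at 0)"
    if "x \<noteq> 0 \<or> y \<noteq> 0" for x y l
    by (rule path_geometry_differentiable_fibre[OF pg vC indep_axis_combination[OF vi d that]])
  have "(\<lambda>t. h 1 t) field_differentiable (at t)" for t
  proof (rule field_differentiable_shift)
    have "h 1 (s + t) = \<alpha> v ((1 *s axis j 1 + t *s axis k 1) + s *s axis k 1)" for s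
      using h_value[of 1 "s + t"] by (simp add: vector_sadd_rdistrib add_ac)
    then show "(\<lambda>s. h 1 (s + t)) field_differentiable (at 0)"
      using fibre[of 1 t k] by simp
  qed
  then have entire1: "(\<lambda>t. h 1 t) holomorphic_on UNIV"
    by (simp add: holomorphic_on_def)
  have "(\<lambda>t. h t 1) field_differentiable (at t)" for t
  proof (rule field_differentiable_shift)
    have "h (s + t) 1 = \<alpha> v ((t *s axis j 1 + 1 *s axis k 1) + s *s axis j 1)" for s
      using h_value[of "s + t" 1] by (simp add: vector_sadd_rdistrib add_ac)
    then show "(\<lambda>s. h (s + t) 1) field_differentiable (at 0)"
      using fibre[of t 1 j] by simp
  qed
  then have entire2: "(\<lambda>t. h t 1) holomorphic_on UNIV"
    by (simp add: holomorphic_on_def)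
  obtain a where a: "\<forall>x y. h x y = (\<Sum>m\<le>3. a m * x ^ (3 - m) * y ^ m)"
    using binary_form_of_homogeneous[OF hom _ entire1 holomorphic_on_imp_continuous_on[OF entire2]]
    by auto
  have "(\<Sum>m\<le>3. a m * x ^ (3 - m) * y ^ m) = a 0 * x^3 + a 1 * x^2 * y + a 2 * x * y^2 + a 3 * y^3"
    for x y :: complex
    by (simp add: eval_nat_numeral atMost_Suc algebra_simps)
  then show ?thesis
    using a unfolding h_def
    by (intro exI[of _ "a 0"] exI[of _ "a 1"] exI[of _ "a 2"] exI[of _ "a 3"]) simp
qed

lemma extend_by_zero_chart:
  fixes v :: "complex^3"
  assumes pg: "path_geometry C \<alpha>" and vC: "v \<in> C" and vi: "v$i \<noteq> 0"
    and d: "i \<noteq> j" "i \<noteq> k" "j \<noteq> k"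
  shows "extend_by_zero \<alpha> v u =
    cubic_from_values (\<alpha> v (axis j 1)) (\<alpha> v (axis k 1)) (\<alpha> v (axis j 1 + axis k 1))
      (\<alpha> v (axis j 1 - axis k 1)) (chart_coord i j v u) (chart_coord i k v u)"
proof -
  define f where "f x y = extend_by_zero \<alpha> v (x *s axis j 1 + y *s axis k 1)" for x y
  obtain a0 a1 a2 a3 where cubic: "\<And>x y. f x y = a0 * x^3 + a1 * x^2 * y + a2 * x * y^2 + a3 * y^3"
    using extend_by_zero_binary_cubic[OF pg vC vi d] unfolding f_def by blast
  have f_value: "f x y = \<alpha> v (x *s axis j 1 + y *s axis k 1)" if "x \<noteq> 0 \<or> y \<noteq> 0" for x y
    using indep_axis_combination[OF vi d that] by (simp add: f_def extend_by_zero_def)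
  have "extend_by_zero \<alpha> v u = extend_by_zero \<alpha> v
          (chart_coord i j v u *s axis j 1 + chart_coord i k v u *s axis k 1 + (u$i / v$i) *s v)"
    using chart_decomposition[OF vi d] by (rule arg_cong)
  also have "\<dots> = f (chart_coord i j v u) (chart_coord i k v u)"
    by (simp add: f_def extend_by_zero_add_multiple[OF pg vC])
  also have "\<dots> = cubic_from_values (f 1 0) (f 0 1) (f 1 1) (f 1 (-1))
      (chart_coord i j v u) (chart_coord i k v u)"
    by (rule binary_cubic_from_values[OF cubic])
  finally show ?thesis
    using f_value[of 1 0] f_value[of 0 1] f_value[of 1 1] f_value[of 1 "-1"] by simp
qed

lemma holo_on_fixed_direction:
  assumes pg: "path_geometry C \<alpha>" and U: "open U" "U \<subseteq> C" "\<And>v. v \<in> U \<Longrightarrow> indep v w"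
  shows "holo_on U (\<lambda>v. \<alpha> v w)"
  unfolding holo_on_def
proof (intro conjI ballI allI)
  have "continuous_on (ptb C) (case_prod \<alpha>)"
    using pg by (simp add: path_geometry_def holo2_on_def)
  then have "continuous_on U (\<lambda>v. case_prod \<alpha> (v, w))"
    by (rule continuous_on_compose2) (use U in \<open>auto intro!: continuous_intros simp: ptb_def\<close>)
  then show "continuous_on U (\<lambda>v. \<alpha> v w)"
    by simp
  show "(\<lambda>t. \<alpha> (z + t *s axis i 1) w) field_differentiable (at 0)" if "z \<in> U" for z i
    using pg that U unfolding path_geometry_def holo2_on_def ptb_def by fast
qed fact

lemma holo_on_chart_coord:
  assumes "open U" "\<And>v. v \<in> U \<Longrightarrow> v$i \<noteq> 0"
  shows "holo_on U (\<lambda>v. chart_coord i j v u)"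
  unfolding chart_coord_def
  by (intro holo_on_diff holo_on_divide holo_on_mult holo_on_const holo_on_coord assms)

lemma holo_on_cubic_from_values:
  assumes "holo_on U A0" "holo_on U A3" "holo_on U S" "holo_on U D" "holo_on U x" "holo_on U y"
  shows "holo_on U (\<lambda>v. cubic_from_values (A0 v) (A3 v) (S v) (D v) (x v) (y v))"
proof -
  have "open U"
    using assms(1) by (simp add: holo_on_def)
  then show ?thesis
    unfolding cubic_from_values_def
    by (intro holo_on_add holo_on_diff holo_on_mult holo_on_power holo_on_divide holo_on_const
        assms) simp_all
qed

lemma holo_on_extend_by_zero:
  assumes pg: "path_geometry C \<alpha>"
  shows "holo_on C (\<lambda>v. extend_by_zero \<alpha> v u)"
proof (rule holo_on_local)
  show oC: "open C"
    using pg by (simp add: path_geometry_def proj_open_def)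
  fix v
  assume vC: "v \<in> C"
  then have "v \<noteq> 0"
    using pg by (auto simp: path_geometry_def proj_open_def)
  then obtain i j k where vi: "v$i \<noteq> 0" and d: "i \<noteq> j" "i \<noteq> k" "j \<noteq> k"
    by (rule chart_exists)
  define U where "U = C \<inter> {v. v$i \<noteq> 0}"
  have "open {v::complex^3. v$i \<noteq> 0}"
    by (rule open_Collect_neq) (intro continuous_intros)+
  then have oU: "open U"
    unfolding U_def using oC by (rule open_Int[rotated])
  have UC: "U \<subseteq> C" and Ui: "\<And>v. v \<in> U \<Longrightarrow> v$i \<noteq> 0"
    by (auto simp: U_def)
  have holo_dir: "holo_on U (\<lambda>v. \<alpha> v (x *s axis j 1 + y *s axis k 1))" if "x \<noteq> 0 \<or> y \<noteq> 0" for x y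
    by (rule holo_on_fixed_direction[OF pg oU UC indep_axis_combination[OF Ui d that]])
  have "holo_on U (\<lambda>v. \<alpha> v (axis j 1))"
    using holo_dir[of 1 0] by simp
  moreover have "holo_on U (\<lambda>v. \<alpha> v (axis k 1))"
    using holo_dir[of 0 1] by simp
  moreover have "holo_on U (\<lambda>v. \<alpha> v (axis j 1 + axis k 1))"
    using holo_dir[of 1 1] by simp
  moreover have "holo_on U (\<lambda>v. \<alpha> v (axis j 1 - axis k 1))"
    using holo_dir[of 1 "-1"] by simp
  ultimately have "holo_on U (\<lambda>v. cubic_from_values (\<alpha> v (axis j 1)) (\<alpha> v (axis k 1))
      (\<alpha> v (axis j 1 + axis k 1)) (\<alpha> v (axis j 1 - axis k 1))
      (chart_coord i j v u) (chart_coord i k v u))"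
    using holo_on_chart_coord[OF oU Ui, of j u] holo_on_chart_coord[OF oU Ui, of k u]
    by (rule holo_on_cubic_from_values)
  moreover have "extend_by_zero \<alpha> w u = cubic_from_values (\<alpha> w (axis j 1)) (\<alpha> w (axis k 1))
      (\<alpha> w (axis j 1 + axis k 1)) (\<alpha> w (axis j 1 - axis k 1))
      (chart_coord i j w u) (chart_coord i k w u)"
    if "w \<in> U" for w
    using that UC Ui by (intro extend_by_zero_chart[OF pg _ _ d]) auto
  ultimately have "holo_on U (\<lambda>v. extend_by_zero \<alpha> v u)"
    by (rule holo_on_cong)
  moreover have "v \<in> U"
    using vC vi by (simp add: U_def)
  ultimately show "\<exists>U. v \<in> U \<and> U \<subseteq> C \<and> holo_on U (\<lambda>v. extend_by_zero \<alpha> v u)"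
    using UC by blast
qed

definition cubic_coeffs ::
    "(complex^3 \<Rightarrow> complex^3 \<Rightarrow> complex) \<Rightarrow> 3 \<Rightarrow> 3 \<Rightarrow> 3 \<Rightarrow> complex^3 \<Rightarrow> complex" where
  "cubic_coeffs \<alpha> a b c v = polarize (extend_by_zero \<alpha> v) (axis a 1) (axis b 1) (axis c 1)"

lemma extend_by_zero_trilinear:
  assumes pg: "path_geometry C \<alpha>" and vC: "v \<in> C"
  shows "\<exists>d. \<forall>w. extend_by_zero \<alpha> v w = trilinear_form d w w w"
proof -
  have "v \<noteq> 0"
    using pg vC by (auto simp: path_geometry_def proj_open_def)
  then obtain i j k where vi: "v$i \<noteq> 0" and d: "i \<noteq> j" "i \<noteq> k" "j \<noteq> k"
    by (rule chart_exists)
  define A0 where "A0 = \<alpha> v (axis j 1)"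
  define A3 where "A3 = \<alpha> v (axis k 1)"
  define S where "S = \<alpha> v (axis j 1 + axis k 1)"
  define D where "D = \<alpha> v (axis j 1 - axis k 1)"
  have "\<exists>e. \<forall>w. A0 * chart_coord i j v w ^ 3
      + ((S - D) / 2 - A3) * chart_coord i j v w ^ 2 * chart_coord i k v w
      + ((S + D) / 2 - A0) * chart_coord i j v w * chart_coord i k v w ^ 2
      + A3 * chart_coord i k v w ^ 3 = trilinear_form e w w w"
    by (rule binary_cubic_linear_forms[OF chart_coord_linear chart_coord_linear]) (use d in auto)
  then show ?thesis
    unfolding extend_by_zero_chart[OF pg vC vi d] cubic_from_values_def A0_def A3_def S_def D_def
    by blast
qed

lemma cubic_eval_cubic_coeffs:
  assumes "path_geometry C \<alpha>" "v \<in> C"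
  shows "cubic_eval (cubic_coeffs \<alpha>) v w = extend_by_zero \<alpha> v w"
proof -
  obtain d where "\<And>w. extend_by_zero \<alpha> v w = trilinear_form d w w w"
    using extend_by_zero_trilinear[OF assms] by blast
  then show ?thesis
    unfolding cubic_eval_def cubic_coeffs_def by (rule sum_polarize_axis)
qed

lemma section3_cubic_coeffs:
  assumes pg: "path_geometry C \<alpha>"
  shows "section3 C (cubic_coeffs \<alpha>)"
  unfolding section3_def
proof (intro conjI allI ballI impI)
  have "open C"
    using pg by (simp add: path_geometry_def proj_open_def)
  then show "holo_on C (cubic_coeffs \<alpha> a b c)" for a b c
    unfolding cubic_coeffs_def[abs_def] polarize_def
    by (intro holo_on_divide holo_on_add holo_on_diff holo_on_const holo_on_extend_by_zero[OF pg])
      auto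
  fix v
  assume vC: "v \<in> C"
  show "cubic_eval (cubic_coeffs \<alpha>) v (w + s *s v) = cubic_eval (cubic_coeffs \<alpha>) v w" for w s
    by (simp add: cubic_eval_cubic_coeffs[OF pg vC] extend_by_zero_add_multiple[OF pg vC])
  show "cubic_eval (cubic_coeffs \<alpha>) (a *s v) w = cubic_eval (cubic_coeffs \<alpha>) v w" if "a \<noteq> 0" for w a
  proof -
    have "a *s v \<in> C"
      using pg vC that by (simp add: path_geometry_def proj_open_def)
    then show ?thesis
      by (simp add: cubic_eval_cubic_coeffs[OF pg] vC extend_by_zero_smult_base[OF pg vC that])
  qed
qed

lemma path_iso_id:
  assumes C: "proj_open C" and agree: "\<And>v w. v \<in> C \<Longrightarrow> indep v w \<Longrightarrow> \<alpha> v w = \<beta> v w"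
  shows "path_iso C \<alpha> C \<beta> (\<lambda>v. v)"
  unfolding path_iso_def
proof (intro conjI allI ballI impI)
  show "holo_on C (\<lambda>v. v $ i)" for i
    using C by (simp add: proj_open_def holo_on_coord)
  show "\<exists>v\<in>C. \<exists>a. a \<noteq> 0 \<and> v = a *s v'" if "v' \<in> C" for v'
    using that by (intro bexI[of _ v'] exI[of _ 1]) auto
  show "\<exists>L. ((\<lambda>v. v) has_derivative L) (at v) \<and> inj L" for v
    by (intro exI[of _ "\<lambda>v. v"] conjI has_derivative_ident) (simp add: inj_on_def)
  show "leaf C \<beta> D ((\<lambda>v. v) \<circ> g)" if "leaf C \<alpha> D g" for D g
    using that agree by (auto simp: leaf_def o_def)
qed (use C in auto)

theorem proposition2p3:
  fixes C :: "(complex^3) set" and \<alpha> :: "complex^3 \<Rightarrow> complex^3 \<Rightarrow> complex"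
  assumes "proj_open C"
    and "path_geometry C \<alpha>"
    and "flat C \<alpha>"
  shows "\<exists>c. section3 C c \<and>
           (\<forall>(v,w)\<in>ptb C. cubic_eval c v w = 0 \<longrightarrow> \<alpha> v w = std_geometry v w) \<and>
           ((\<forall>v\<in>C. \<forall>w. cubic_eval c v w = 0) \<longrightarrow> (\<exists>\<phi>. path_iso C std_geometry C \<alpha> \<phi>))"
proof (intro exI conjI)
  note eval = cubic_eval_cubic_coeffs[OF assms(2)]
  show "section3 C (cubic_coeffs \<alpha>)"
    using assms(2) by (rule section3_cubic_coeffs)
  show "\<forall>(v,w)\<in>ptb C. cubic_eval (cubic_coeffs \<alpha>) v w = 0 \<longrightarrow> \<alpha> v w = std_geometry v w"
    by (auto simp: ptb_def eval extend_by_zero_def std_geometry_def)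
  show "(\<forall>v\<in>C. \<forall>w. cubic_eval (cubic_coeffs \<alpha>) v w = 0) \<longrightarrow> (\<exists>\<phi>. path_iso C std_geometry C \<alpha> \<phi>)"
  proof
    assume vanish: "\<forall>v\<in>C. \<forall>w. cubic_eval (cubic_coeffs \<alpha>) v w = 0"
    have "std_geometry v w = \<alpha> v w" if "v \<in> C" "indep v w" for v w
      using vanish[rule_format, OF that(1), of w] that
      by (simp add: eval[OF that(1)] extend_by_zero_def std_geometry_def)
    then have "path_iso C std_geometry C \<alpha> (\<lambda>v. v)"
      by (rule path_iso_id[OF assms(1)])
    then show "\<exists>\<phi>. path_iso C std_geometry C \<alpha> \<phi>" by blast
  qed
qed

end
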